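(* There is no six-qubit stabilizer code encoding one qubit that has CSS structure and corrects an arbitrary single-qubit error. That is, there do not exist five independent, pairwise commuting operators $g_1,\dots,g_5$ in the six-qubit Pauli group, each of which is a tensor product of only $X$ and $I$ factors or only of $Z$ and $I$ factors (up to sign), such that the group $S=\langle g_1,\dots,g_5\rangle$ satisfies: for every pair $E_a,E_b\in\{I\}\cup\{X_i,Y_i,Z_i:i=1,\dots,6\}$, the operator $E_a^\dagger E_b$ either anticommutes with some element of $S$ or lies in $S$ up to phase.
   Context: $X,Y,Z$ are the single-qubit Pauli matrices and $P_i$ denotes the operator acting as $P$ on qubit $i$ and as identity elsewhere. Generators are independent if none is, up to phase, a product of the others. *)

theory Defs
  imports Main
begin

datatype pauli1 = PI | PX | PY | PZ

text \<open>Product of single-qubit Paulis: P Q = i^k R, returned as (k, R).\<close>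
fun mult1 :: "pauli1 \<Rightarrow> pauli1 \<Rightarrow> nat \<times> pauli1" where
  "mult1 PI q = (0, q)"
| "mult1 p PI = (0, p)"
| "mult1 PX PX = (0, PI)"
| "mult1 PY PY = (0, PI)"
| "mult1 PZ PZ = (0, PI)"
| "mult1 PX PY = (1, PZ)"
| "mult1 PY PX = (3, PZ)"
| "mult1 PY PZ = (1, PX)"
| "mult1 PZ PY = (3, PX)"
| "mult1 PZ PX = (1, PY)"
| "mult1 PX PZ = (3, PY)"

text \<open>An n-qubit Pauli operator i^k (P_0 \<otimes> ... \<otimes> P_{n-1}) is represented as the
  pair (k, P) with k < 4 (phase exponent of i) and P j = PI for all j \<ge> n.
  Qubits are indexed 0..n-1.\<close>
type_synonym pauli = "nat \<times> (nat \<Rightarrow> pauli1)"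

definition pauli_group :: "nat \<Rightarrow> pauli set" where
  "pauli_group n = {(k, P). k < 4 \<and> (\<forall>j\<ge>n. P j = PI)}"

definition pmult :: "nat \<Rightarrow> pauli \<Rightarrow> pauli \<Rightarrow> pauli" where
  "pmult n a b = ((fst a + fst b + (\<Sum>j<n. fst (mult1 (snd a j) (snd b j)))) mod 4,
                  (\<lambda>j. snd (mult1 (snd a j) (snd b j))))"

definition pid :: pauli where
  "pid = (0, (\<lambda>j. PI))"

text \<open>Hermitian adjoint: Pauli matrices are Hermitian, so only the phase is conjugated.\<close>
definition padj :: "pauli \<Rightarrow> pauli" where
  "padj a = ((4 - fst a) mod 4, snd a)"

definition commute :: "nat \<Rightarrow> pauli \<Rightarrow> pauli \<Rightarrow> bool" where
  "commute n a b \<longleftrightarrow> pmult n a b = pmult n b a"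

definition anticommute :: "nat \<Rightarrow> pauli \<Rightarrow> pauli \<Rightarrow> bool" where
  "anticommute n a b \<longleftrightarrow> pmult n a b = pmult n (2, \<lambda>j. PI) (pmult n b a)"

definition eq_phase :: "pauli \<Rightarrow> pauli \<Rightarrow> bool" where
  "eq_phase a b \<longleftrightarrow> snd a = snd b"

text \<open>Group generated by a set of Pauli operators (every Pauli operator has finite
  order, so the generated group is the set of finite products of generators).\<close>
inductive_set gen_group :: "nat \<Rightarrow> pauli set \<Rightarrow> pauli set" for n G where
  gen_id: "pid \<in> gen_group n G"
| gen_step: "g \<in> G \<Longrightarrow> s \<in> gen_group n G \<Longrightarrow> pmult n g s \<in> gen_group n G"

definition independent_gens :: "nat \<Rightarrow> ('i \<Rightarrow> pauli) \<Rightarrow> 'i set \<Rightarrow> bool" where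
  "independent_gens n g I \<longleftrightarrow>
     (\<forall>i\<in>I. \<not> (\<exists>s\<in>gen_group n (g ` (I - {i})). eq_phase s (g i)))"

definition css_type :: "nat \<Rightarrow> pauli \<Rightarrow> bool" where
  "css_type n a \<longleftrightarrow> fst a \<in> {0, 2} \<and>
     ((\<forall>j<n. snd a j \<in> {PI, PX}) \<or> (\<forall>j<n. snd a j \<in> {PI, PZ}))"

definition single :: "nat \<Rightarrow> pauli1 \<Rightarrow> pauli" where
  "single i P = (0, (\<lambda>j. if j = i then P else PI))"

definition errors :: "nat \<Rightarrow> pauli set" where
  "errors n = {pid} \<union> {single i P | i P. i < n \<and> P \<in> {PX, PY, PZ}}"

end

theory Submission
  imports Defs
begin

text \<open>
  Write the X- and Z-supports of Pauli operators as subsets of the six qubits,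
  i.e. as binary vectors.  For a CSS stabilizer group generated by r X-type and 5 - r Z-type
  operators, the X-supports of group elements span a code U with at most 2^r words and the
  Z-supports a code V with at most 2^(5-r) words.  Applying the error-correction condition
  to the products X_i X_k and Z_i Z_k (and X_i, Z_i) shows: every word of weight one or two
  orthogonal to U lies in V, and every such word orthogonal to V lies in U.  By symmetry
  we may assume r <= 2, so U is spanned by two words x1, x2.  Grouping the qubits by their
  column (membership in x1 and x2), V then contains a triangular family of pairs inside each
  column class, and, when all three nonzero columns occur, one more word detected by a
  small column class; counting gives |V| >= 2^(6-r) > 2^(5-r), a contradiction.
\<close>

section \<open>Binary codes as families of sets\<close>

lemma even_card_sym_diff:
  assumes "finite X" "finite Y"
  shows "even (card (sym_diff X Y)) \<longleftrightarrow> (even (card X) \<longleftrightarrow> even (card Y))"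
proof -
  have "card (sym_diff X Y) = card (X - Y) + card (Y - X)"
    using assms by (intro card_Un_disjoint) auto
  moreover have "card X = card (X - Y) + card (X \<inter> Y)" "card Y = card (Y - X) + card (X \<inter> Y)"
    using card_Int_Diff[OF assms(1), of Y] card_Int_Diff[OF assms(2), of X]
    by (simp_all add: Int_commute)
  ultimately show ?thesis by presburger
qed

lemma even_card_inter_sym_diff:
  assumes "finite K"
  shows "even (card (K \<inter> sym_diff X Y)) \<longleftrightarrow> (even (card (K \<inter> X)) \<longleftrightarrow> even (card (K \<inter> Y)))"
proof -
  have "K \<inter> sym_diff X Y = sym_diff (K \<inter> X) (K \<inter> Y)" by blast
  then show ?thesis using assms by (simp add: even_card_sym_diff)
qed

text \<open>A family of sets is read as a family of vectors over GF(2); the parity sum of the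
  members indexed by A is the set of points covered an odd number of times.\<close>

definition parity_sum :: "('i \<Rightarrow> 'a set) \<Rightarrow> 'i set \<Rightarrow> 'a set" where
  "parity_sum f A = {x. odd (card {i \<in> A. x \<in> f i})}"

lemma parity_sum_empty [simp]: "parity_sum f {} = {}"
  by (simp add: parity_sum_def)

lemma parity_sum_singleton [simp]: "parity_sum f {i} = f i"
proof -
  have "{j \<in> {i}. x \<in> f j} = (if x \<in> f i then {i} else {})" for x by auto
  then show ?thesis by (simp add: parity_sum_def)
qed

lemma parity_sum_sym_diff:
  assumes "finite A" "finite B"
  shows "parity_sum f (sym_diff A B) = sym_diff (parity_sum f A) (parity_sum f B)"
proof -
  have "{i \<in> sym_diff A B. x \<in> f i} = sym_diff {i \<in> A. x \<in> f i} {i \<in> B. x \<in> f i}" for x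
    by blast
  then show ?thesis
    using assms by (auto simp: parity_sum_def even_card_sym_diff)
qed

lemma parity_sum_insert:
  assumes "finite A" "a \<notin> A"
  shows "parity_sum f (insert a A) = sym_diff (f a) (parity_sum f A)"
proof -
  have "insert a A = sym_diff {a} A" using assms(2) by blast
  then show ?thesis using assms(1) by (simp add: parity_sum_sym_diff)
qed

lemma parity_sum_subset: "parity_sum f A \<subseteq> \<Union> (f ` A)"
  by (auto simp: parity_sum_def) (metis (mono_tags, lifting) Collect_empty_eq card.empty even_zero)

lemma parity_sum_restrict:
  assumes "\<And>i. i \<in> A - B \<Longrightarrow> f i = {}"
  shows "parity_sum f A = parity_sum f (A \<inter> B)"
proof -
  have "{i \<in> A. x \<in> f i} = {i \<in> A \<inter> B. x \<in> f i}" for x using assms by blast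
  then show ?thesis by (simp add: parity_sum_def)
qed

lemma parity_sum_even_overlap:
  assumes "finite A" "finite K" "\<And>i. i \<in> A \<Longrightarrow> even (card (K \<inter> f i))"
  shows "even (card (K \<inter> parity_sum f A))"
  using assms
  by (induction A rule: finite_induct) (auto simp: parity_sum_insert even_card_inter_sym_diff)

lemma parity_sum_inj_on_triangular:
  assumes "\<And>i. i \<in> T \<Longrightarrow> i \<in> f i" "\<And>i i'. i \<in> T \<Longrightarrow> i' \<in> T \<Longrightarrow> i \<noteq> i' \<Longrightarrow> i \<notin> f i'"
  shows "inj_on (parity_sum f) (Pow T)"
proof (rule inj_onI)
  fix A B assume A: "A \<in> Pow T" and B: "B \<in> Pow T" and eq: "parity_sum f A = parity_sum f B"
  have trace: "i \<in> parity_sum f C \<longleftrightarrow> i \<in> C" if "C \<subseteq> T" "i \<in> T" for C i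
  proof -
    have "{i' \<in> C. i \<in> f i'} = (if i \<in> C then {i} else {})" using that assms by auto
    then show ?thesis by (simp add: parity_sum_def)
  qed
  show "A = B" using trace[of A] trace[of B] A B eq by blast
qed

text \<open>The span of a family over GF(2), and binary linear codes (families of sets closed
  under symmetric difference).\<close>
definition xor_span :: "('i \<Rightarrow> 'a set) \<Rightarrow> 'i set \<Rightarrow> 'a set set" where
  "xor_span f A = parity_sum f ` Pow A"

definition sd_closed :: "'a set set \<Rightarrow> bool" where
  "sd_closed V \<longleftrightarrow> {} \<in> V \<and> (\<forall>a\<in>V. \<forall>b\<in>V. sym_diff a b \<in> V)"

lemma sd_closed_xor_span:
  assumes "finite A"
  shows "sd_closed (xor_span f A)"
  unfolding sd_closed_def xor_span_def
proof (intro conjI ballI)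
  show "{} \<in> parity_sum f ` Pow A" using image_eqI[of "{}" "parity_sum f" "{}" "Pow A"] by simp
  fix a b assume "a \<in> parity_sum f ` Pow A" "b \<in> parity_sum f ` Pow A"
  then obtain B C where BC: "B \<subseteq> A" "C \<subseteq> A" "a = parity_sum f B" "b = parity_sum f C"
    by blast
  have "sym_diff a b = sym_diff (parity_sum f B) (parity_sum f C)" using BC by simp
  also have "\<dots> = parity_sum f (sym_diff B C)"
    using finite_subset[OF BC(1) assms] finite_subset[OF BC(2) assms] by (simp add: parity_sum_sym_diff)
  finally have "sym_diff a b = parity_sum f (sym_diff B C)" .
  moreover have "sym_diff B C \<in> Pow A" using BC(1,2) by blast
  ultimately show "sym_diff a b \<in> parity_sum f ` Pow A" by (rule image_eqI)
qed

lemma xor_span_subset_code: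
  assumes "sd_closed V" "finite A" "f ` A \<subseteq> V"
  shows "xor_span f A \<subseteq> V"
proof
  have closed: "parity_sum f C \<in> V" if "finite C" "C \<subseteq> A" for C
    using that assms(1,3) by (induction C rule: finite_induct)
      (auto simp: parity_sum_insert sd_closed_def)
  fix w assume "w \<in> xor_span f A"
  then obtain B where B: "B \<subseteq> A" "w = parity_sum f B" by (auto simp: xor_span_def)
  show "w \<in> V" using closed[of B] finite_subset[OF B(1) assms(2)] B by simp
qed

lemma xor_span_subset_Pow:
  assumes "\<And>i. f i \<subseteq> I"
  shows "xor_span f A \<subseteq> Pow I"
proof
  fix w assume "w \<in> xor_span f A"
  then obtain B where "w = parity_sum f B" by (auto simp: xor_span_def)
  then show "w \<in> Pow I" using parity_sum_subset[of f B] assms by blast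
qed

lemma card_xor_span_le:
  assumes "finite A"
  shows "card (xor_span f A) \<le> 2 ^ card A"
  unfolding xor_span_def using assms card_image_le[of "Pow A" "parity_sum f"] by (simp add: card_Pow)

lemma card_xor_span_triangular:
  assumes "finite T" "\<And>i. i \<in> T \<Longrightarrow> i \<in> f i"
    "\<And>i i'. i \<in> T \<Longrightarrow> i' \<in> T \<Longrightarrow> i \<noteq> i' \<Longrightarrow> i \<notin> f i'"
  shows "card (xor_span f T) = 2 ^ card T"
  unfolding xor_span_def
  using card_image[OF parity_sum_inj_on_triangular[OF assms(2,3)]] assms(1) by (simp add: card_Pow)

text \<open>Even overlap with every member of a family is orthogonality over GF(2); the words of
  weight one or two on n coordinates are the supports of the errors considered below.\<close>
definition even_overlap :: "'a set \<Rightarrow> 'a set set \<Rightarrow> bool" where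
  "even_overlap e W \<longleftrightarrow> (\<forall>w\<in>W. even (card (e \<inter> w)))"

definition low_weight :: "nat \<Rightarrow> nat set \<Rightarrow> bool" where
  "low_weight n e \<longleftrightarrow> e \<subseteq> {0..<n} \<and> 1 \<le> card e \<and> card e \<le> 2"

lemma even_overlap_two_generators:
  assumes "finite e" "even_overlap e {x1, x2}"
  shows "even_overlap e {{}, x1, x2, sym_diff x1 x2}"
  using assms even_card_inter_sym_diff[OF assms(1), of x1 x2] by (simp add: even_overlap_def)

text \<open>A code containing a triangular family and a word with odd overlap with K, where
  all members of the family meet K evenly, has at least twice as many words as the family
  has subsets: the span and its translate by the odd word are disjoint.\<close>
lemma card_code_odd_extension:
  assumes V: "sd_closed V" "finite V" and K: "finite K"
    and T: "finite T" "\<And>i. i \<in> T \<Longrightarrow> i \<in> f i" "\<And>i i'. i \<in> T \<Longrightarrow> i' \<in> T \<Longrightarrow> i \<noteq> i' \<Longrightarrow> i \<notin> f i'"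
    and fV: "f ` T \<subseteq> V" and f_even: "\<And>i. i \<in> T \<Longrightarrow> even (card (K \<inter> f i))"
    and v: "v \<in> V" "odd (card (K \<inter> v))"
  shows "2 ^ Suc (card T) \<le> card V"
proof -
  define W where "W = xor_span f T"
  have W_V: "W \<subseteq> V" unfolding W_def by (rule xor_span_subset_code[OF V(1) T(1) fV])
  have card_W: "card W = 2 ^ card T" unfolding W_def by (rule card_xor_span_triangular[OF T])
  have even_W: "even (card (K \<inter> w))" if "w \<in> W" for w
    using that T(1) K f_even by (auto simp: W_def xor_span_def finite_subset
        intro!: parity_sum_even_overlap)
  have shift_V: "sym_diff v ` W \<subseteq> V" using W_V v(1) V(1) by (auto simp: sd_closed_def)
  have "inj_on (sym_diff v) W" by (rule inj_onI) blast
  then have card_shift: "card (sym_diff v ` W) = card W" by (rule card_image)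
  have disjoint: "W \<inter> sym_diff v ` W = {}"
  proof -
    have "odd (card (K \<inter> sym_diff v w))" if "w \<in> W" for w
      using even_W[OF that] v(2) even_card_inter_sym_diff[OF K, of v w] by simp
    then show ?thesis using even_W by blast
  qed
  have "card (W \<union> sym_diff v ` W) \<le> card V"
    using W_V shift_V V(2) by (intro card_mono) auto
  moreover have "card (W \<union> sym_diff v ` W) = card W + card (sym_diff v ` W)"
    using V(2) W_V shift_V disjoint by (intro card_Un_disjoint) (auto intro: finite_subset)
  ultimately show ?thesis using card_W card_shift by simp
qed

section \<open>Mutually dual low-weight codes\<close>

text \<open>Coordinates are grouped according to the members of X containing them, i.e. by
  their column in the matrix whose rows are the members of X.  A two-element subset of a
  class, and a singleton outside every member of X, have even overlap with all of X.\<close>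
definition column_class :: "'a set set \<Rightarrow> 'a set \<Rightarrow> 'a \<Rightarrow> 'a set" where
  "column_class X I j = {k \<in> I. \<forall>x\<in>X. k \<in> x \<longleftrightarrow> j \<in> x}"

text \<open>Choosing the least element of each class of covered coordinates and pairing every
  other covered coordinate with it gives a triangular family of such sets, indexed by all
  coordinates except one per class.\<close>
lemma column_triangular_family:
  fixes I :: "'a::linorder set"
  assumes "finite I"
  obtains T f where "T \<subseteq> I"
    and "card I \<le> card T + card (column_class X I ` (I \<inter> \<Union>X))"
    and "\<And>i. i \<in> T \<Longrightarrow> i \<in> f i"
    and "\<And>i i'. i \<in> T \<Longrightarrow> i' \<in> T \<Longrightarrow> i \<noteq> i' \<Longrightarrow> i \<notin> f i'"
    and "\<And>i. i \<in> T \<Longrightarrow> f i \<subseteq> column_class X I i"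
    and "\<And>i. i \<in> T \<Longrightarrow> i \<in> \<Union>X \<Longrightarrow> card (f i) = 2"
    and "\<And>i. i \<in> T \<Longrightarrow> i \<notin> \<Union>X \<Longrightarrow> f i = {i}"
proof -
  define m where "m i = Min (column_class X I i)" for i
  define R where "R = m ` (I \<inter> \<Union>X)"
  define f where "f i = (if i \<in> \<Union>X then {m i, i} else {i})" for i
  have m_class: "m i \<in> column_class X I i" if "i \<in> I" for i
    unfolding m_def using assms that by (intro Min_in) (auto simp: column_class_def)
  have R_I: "R \<subseteq> I" using m_class by (auto simp: R_def column_class_def)
  have "R = Min ` column_class X I ` (I \<inter> \<Union>X)" by (simp add: R_def m_def image_image)
  then have "card R \<le> card (column_class X I ` (I \<inter> \<Union>X))"
    using card_image_le assms by (metis finite_Int finite_imageI)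
  moreover have "card I = card (I - R) + card R"
    using R_I assms card_mono[OF assms R_I] by (simp add: card_Diff_subset finite_subset)
  ultimately have count: "card I \<le> card (I - R) + card (column_class X I ` (I \<inter> \<Union>X))"
    by simp
  have triangular: "i \<notin> f i'" if "i \<in> I - R" "i' \<in> I - R" "i \<noteq> i'" for i i'
    using that by (auto simp: f_def R_def)
  have in_class: "f i \<subseteq> column_class X I i" if "i \<in> I" for i
    using m_class[OF that] that by (auto simp: f_def column_class_def)
  have pair: "card (f i) = 2" if "i \<in> I - R" "i \<in> \<Union>X" for i
  proof -
    have "m i \<in> R" using that by (auto simp: R_def)
    then have "m i \<noteq> i" using that by auto
    then show ?thesis using that by (simp add: f_def)
  qed
  show thesis
    by (rule that[of "I - R" f]) (use count triangular in_class pair in \<open>auto simp: f_def\<close>)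
qed

lemma even_overlap_column_set:
  assumes "i \<in> I" "F \<subseteq> column_class X I i"
    and "i \<in> \<Union>X \<Longrightarrow> card F = 2" "i \<notin> \<Union>X \<Longrightarrow> F = {i}"
    and "K \<subseteq> \<Union>X" "\<And>j k. j \<in> I \<Longrightarrow> k \<in> column_class X I j \<Longrightarrow> k \<in> K \<longleftrightarrow> j \<in> K"
  shows "even (card (K \<inter> F))"
proof (cases "i \<in> \<Union>X")
  case True
  have "K \<inter> F = (if i \<in> K then F else {})" using assms(1,2,6) by auto
  then show ?thesis using assms(3) True by simp
next
  case False
  then have "K \<inter> F = {}" using assms(4,5) by auto
  then show ?thesis by simp
qed

lemma code_contains_column_family:
  assumes x: "x1 \<subseteq> {0..<n}" "x2 \<subseteq> {0..<n}"
    and contains: "\<And>e. low_weight n e \<Longrightarrow> even_overlap e {x1, x2} \<Longrightarrow> e \<in> V"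
  obtains T f where "finite T" "\<And>i. i \<in> T \<Longrightarrow> i \<in> f i"
    "\<And>i i'. i \<in> T \<Longrightarrow> i' \<in> T \<Longrightarrow> i \<noteq> i' \<Longrightarrow> i \<notin> f i'" "f ` T \<subseteq> V"
    "n \<le> card T + card ((\<lambda>j. (j \<in> x1, j \<in> x2)) ` (x1 \<union> x2))"
    "\<And>i j. i \<in> T \<Longrightarrow> j \<in> x1 \<union> x2 \<Longrightarrow> even (card (column_class {x1, x2} {0..<n} j \<inter> f i))"
proof -
  define I where "I = {0..<n}"
  define X where "X = {x1, x2}"
  have I_X: "I \<inter> \<Union>X = x1 \<union> x2" using x by (auto simp: I_def X_def)
  obtain T f where T: "T \<subseteq> I" "card I \<le> card T + card (column_class X I ` (I \<inter> \<Union>X))"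
    and tri: "\<And>i. i \<in> T \<Longrightarrow> i \<in> f i" "\<And>i i'. i \<in> T \<Longrightarrow> i' \<in> T \<Longrightarrow> i \<noteq> i' \<Longrightarrow> i \<notin> f i'"
    and f: "\<And>i. i \<in> T \<Longrightarrow> f i \<subseteq> column_class X I i"
      "\<And>i. i \<in> T \<Longrightarrow> i \<in> \<Union>X \<Longrightarrow> card (f i) = 2" "\<And>i. i \<in> T \<Longrightarrow> i \<notin> \<Union>X \<Longrightarrow> f i = {i}"
    using column_triangular_family[of I X] by (auto simp: I_def)
  have even_f: "even (card (K \<inter> f i))"
    if "i \<in> T" "K \<subseteq> \<Union>X" "\<And>j k. j \<in> I \<Longrightarrow> k \<in> column_class X I j \<Longrightarrow> k \<in> K \<longleftrightarrow> j \<in> K"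
    for i K
    using that T(1) f by (intro even_overlap_column_set[of i I]) auto
  have f_V: "f i \<in> V" if "i \<in> T" for i
  proof (rule contains)
    have "f i \<subseteq> I" using f(1)[OF that] by (auto simp: column_class_def)
    moreover have "card (f i) = 1 \<or> card (f i) = 2" using f(2,3)[OF that] by force
    ultimately show "low_weight n (f i)" by (auto simp: low_weight_def I_def)
    show "even_overlap (f i) {x1, x2}"
      using even_f[OF that, of x1] even_f[OF that, of x2]
      by (auto simp: even_overlap_def column_class_def X_def Int_commute)
  qed
  define pattern_class where
    "pattern_class p = {k \<in> I. (k \<in> x1 \<longleftrightarrow> fst p) \<and> (k \<in> x2 \<longleftrightarrow> snd p)}" for p
  have "column_class X I ` (I \<inter> \<Union>X) = (\<lambda>j. pattern_class (j \<in> x1, j \<in> x2)) ` (x1 \<union> x2)"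
    unfolding I_X by (rule image_cong) (auto simp: column_class_def X_def pattern_class_def)
  also have "\<dots> = pattern_class ` (\<lambda>j. (j \<in> x1, j \<in> x2)) ` (x1 \<union> x2)"
    by (rule image_image[symmetric])
  finally have classes: "card (column_class X I ` (I \<inter> \<Union>X))
      \<le> card ((\<lambda>j. (j \<in> x1, j \<in> x2)) ` (x1 \<union> x2))"
    using finite_subset[OF Un_least[OF x]] by (simp add: card_image_le)
  have even_classes: "even (card (column_class {x1, x2} {0..<n} j \<inter> f i))"
    if "i \<in> T" "j \<in> x1 \<union> x2" for i j
    using that x by (intro even_f) (auto simp: column_class_def X_def I_def)
  show thesis
    using that[of T f] T classes tri image_subsetI[of T f V, OF f_V] even_classes finite_subset[OF T(1)]
    by (auto simp: I_def)
qed

lemma small_column_class: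
  assumes "a1 \<in> x1 - x2" "a2 \<in> x2 - x1" "a3 \<in> x1 \<inter> x2" "{a1, a2, a3} \<subseteq> {0..<6}"
  obtains j where "j \<in> x1 \<union> x2" "low_weight 6 (column_class {x1, x2} {0..<6} j)"
    "column_class {x1, x2} {0..<6} j \<notin> {{}, x1, x2, sym_diff x1 x2}"
proof -
  define Q where "Q j = column_class {x1, x2} {0..<6::nat} j" for j
  have Q: "Q j = {k \<in> {0..<6}. (k \<in> x1 \<longleftrightarrow> j \<in> x1) \<and> (k \<in> x2 \<longleftrightarrow> j \<in> x2)}" for j
    by (auto simp: Q_def column_class_def)
  have fin: "finite (Q j)" for j by (simp add: Q)
  have "card (Q a1 \<union> Q a2 \<union> Q a3) \<le> card {0..<6::nat}" by (intro card_mono) (auto simp: Q)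
  moreover have "card (Q a1 \<union> Q a2 \<union> Q a3) = card (Q a1) + card (Q a2) + card (Q a3)"
    using assms fin by (simp add: card_Un_disjoint Q Int_Un_distrib2 disjoint_iff)
  ultimately have "card (Q a1) \<le> 2 \<or> card (Q a2) \<le> 2 \<or> card (Q a3) \<le> 2" by simp linarith
  then obtain j where j: "j \<in> {a1, a2, a3}" "card (Q j) \<le> 2" by blast
  have "j \<in> Q j" using j assms by (auto simp: Q)
  then have "1 \<le> card (Q j)" using fin by (metis One_nat_def Suc_leI card_gt_0_iff empty_iff)
  moreover have "Q j \<subseteq> {0..<6}" by (auto simp: Q)
  ultimately have "low_weight 6 (Q j)" using j(2) by (simp add: low_weight_def)
  moreover have "Q j \<notin> {{}, x1, x2, sym_diff x1 x2}" using j assms by (auto simp: Q)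
  moreover have "j \<in> x1 \<union> x2" using j assms by auto
  ultimately show thesis using that[of j] unfolding Q_def by blast
qed

lemma all_column_patterns:
  assumes "\<not> card ((\<lambda>j. (j \<in> x1, j \<in> x2)) ` (x1 \<union> x2)) \<le> 2"
  obtains a1 a2 a3 where "a1 \<in> x1 - x2" "a2 \<in> x2 - x1" "a3 \<in> x1 \<inter> x2"
    "card ((\<lambda>j. (j \<in> x1, j \<in> x2)) ` (x1 \<union> x2)) = 3"
proof -
  define patterns where "patterns = (\<lambda>j. (j \<in> x1, j \<in> x2)) ` (x1 \<union> x2)"
  have sub: "patterns \<subseteq> {(True, False), (False, True), (True, True)}"
    by (auto simp: patterns_def)
  then have "card patterns \<le> 3" using card_mono[OF _ sub] by simp
  then have all: "patterns = {(True, False), (False, True), (True, True)}"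
    using assms sub by (intro card_subset_eq) (auto simp: patterns_def)
  then have "(True, False) \<in> patterns" "(False, True) \<in> patterns" "(True, True) \<in> patterns"
    by auto
  then have "\<exists>a1. a1 \<in> x1 - x2" "\<exists>a2. a2 \<in> x2 - x1" "\<exists>a3. a3 \<in> x1 \<inter> x2"
    by (auto simp: patterns_def)
  then show thesis using that all by (auto simp: patterns_def)
qed

lemma dual_low_weight_code_bound:
  fixes U V :: "nat set set"
  assumes V: "sd_closed V" "V \<subseteq> Pow {0..<6}" and x: "x1 \<subseteq> {0..<6}" "x2 \<subseteq> {0..<6}"
    and U: "U \<subseteq> {{}, x1, x2, sym_diff x1 x2}"
    and U_V: "\<And>e. low_weight 6 e \<Longrightarrow> even_overlap e U \<Longrightarrow> e \<in> V"
    and V_U: "\<And>e. low_weight 6 e \<Longrightarrow> even_overlap e V \<Longrightarrow> e \<in> U"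
  shows "16 \<le> card V" and "x2 = {} \<Longrightarrow> 32 \<le> card V" and "x1 = {} \<Longrightarrow> x2 = {} \<Longrightarrow> 64 \<le> card V"
proof -
  define patterns where "patterns = (\<lambda>j. (j \<in> x1, j \<in> x2)) ` (x1 \<union> x2)"
  have fin_V: "finite V" using V(2) finite_subset by blast
  have contains: "e \<in> V" if "low_weight 6 e" "even_overlap e {x1, x2}" for e
  proof (rule U_V[OF that(1)])
    have "finite e" using that(1) finite_subset by (auto simp: low_weight_def)
    then show "even_overlap e U"
      using even_overlap_two_generators[OF _ that(2)] U by (auto simp: even_overlap_def)
  qed
  obtain T f where T: "finite T" "\<And>i. i \<in> T \<Longrightarrow> i \<in> f i"
      "\<And>i i'. i \<in> T \<Longrightarrow> i' \<in> T \<Longrightarrow> i \<noteq> i' \<Longrightarrow> i \<notin> f i'"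
    and f_V: "f ` T \<subseteq> V"
    and count: "6 \<le> card T + card ((\<lambda>j. (j \<in> x1, j \<in> x2)) ` (x1 \<union> x2))"
    and even_classes:
      "\<And>i j. i \<in> T \<Longrightarrow> j \<in> x1 \<union> x2 \<Longrightarrow> even (card (column_class {x1, x2} {0..<6} j \<inter> f i))"
    using code_contains_column_family[OF x contains] by blast
  have "card (xor_span f T) \<le> card V"
    by (rule card_mono[OF fin_V xor_span_subset_code[OF V(1) T(1) f_V]])
  then have power_le: "2 ^ k \<le> card V" if "k \<le> card T" for k :: nat
    using card_xor_span_triangular[OF T] that by (metis order_trans one_le_numeral power_increasing)
  show "x1 = {} \<Longrightarrow> x2 = {} \<Longrightarrow> 64 \<le> card V"
    using power_le[of 6] count by simp
  show "x2 = {} \<Longrightarrow> 32 \<le> card V"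
  proof -
    assume "x2 = {}"
    then have "patterns \<subseteq> {(True, False)}" by (auto simp: patterns_def)
    then have "card patterns \<le> 1" using card_mono[of "{(True, False)}" patterns] by simp
    then show ?thesis using power_le[of 5] count by (simp add: patterns_def)
  qed
  show "16 \<le> card V"
  proof (cases "card patterns \<le> 2")
    case True
    then show ?thesis using power_le[of 4] count by (simp add: patterns_def)
  next
    case False
    then obtain a1 a2 a3 where a: "a1 \<in> x1 - x2" "a2 \<in> x2 - x1" "a3 \<in> x1 \<inter> x2"
      and three: "card patterns = 3"
      unfolding patterns_def by (rule all_column_patterns)
    have "{a1, a2, a3} \<subseteq> {0..<6}" using a x by auto
    with a obtain j where j: "j \<in> x1 \<union> x2" "low_weight 6 (column_class {x1, x2} {0..<6} j)"
      "column_class {x1, x2} {0..<6} j \<notin> {{}, x1, x2, sym_diff x1 x2}"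
      by (rule small_column_class)
    then have "\<not> even_overlap (column_class {x1, x2} {0..<6} j) V" using V_U U by blast
    then obtain v where v: "v \<in> V" "odd (card (column_class {x1, x2} {0..<6} j \<inter> v))"
      by (auto simp: even_overlap_def)
    have "3 \<le> card T" using count three by (simp add: patterns_def)
    then have "(2::nat) ^ 4 \<le> 2 ^ Suc (card T)" by (intro power_increasing) simp_all
    also have "\<dots> \<le> card V"
      by (rule card_code_odd_extension[OF V(1) fin_V _ T f_V _ v])
        (use even_classes j(1) in \<open>auto simp: column_class_def\<close>)
    finally show ?thesis by simp
  qed
qed

lemma xor_span_at_most_two:
  assumes "finite A" "card A \<le> 2"
  obtains x1 x2 where "x1 \<in> xor_span f A" "x2 \<in> xor_span f A"
    "xor_span f A \<subseteq> {{}, x1, x2, sym_diff x1 x2}"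
    "card A \<le> 1 \<Longrightarrow> x2 = {}" "card A = 0 \<Longrightarrow> x1 = {}"
proof -
  have "card A = 0 \<or> card A = 1 \<or> card A = 2" using assms(2) by auto
  then show thesis
  proof (elim disjE)
    assume "card A = 0"
    then have "xor_span f A = {{}}" using assms(1) by (simp add: xor_span_def)
    then show thesis using that[of "{}" "{}"] by simp
  next
    assume "card A = 1"
    then obtain a where "A = {a}" by (rule card_1_singletonE)
    then have "xor_span f A = {{}, f a}" by (auto simp: xor_span_def Pow_insert)
    then show thesis using that[of "f a" "{}"] \<open>card A = 1\<close> by simp
  next
    assume "card A = 2"
    then obtain a b where ab: "A = {a, b}" "a \<noteq> b" by (meson card_2_iff)
    then have "parity_sum f {a, b} = sym_diff (f a) (f b)" by (simp add: parity_sum_insert)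
    then have "xor_span f A = {{}, f a, f b, sym_diff (f a) (f b)}"
      using ab by (simp add: xor_span_def Pow_insert insert_commute)
    then show thesis using that[of "f a" "f b"] \<open>card A = 2\<close> by simp
  qed
qed

lemma no_low_weight_dual_pair_small:
  fixes xs zs :: "'i \<Rightarrow> nat set"
  assumes fin: "finite XI" "finite ZI" and dims: "card XI + card ZI = 5" "card XI \<le> 2"
    and supp: "\<And>i. xs i \<subseteq> {0..<6}" "\<And>i. zs i \<subseteq> {0..<6}"
    and X_Z: "\<And>e. low_weight 6 e \<Longrightarrow> even_overlap e (xor_span xs XI) \<Longrightarrow> e \<in> xor_span zs ZI"
    and Z_X: "\<And>e. low_weight 6 e \<Longrightarrow> even_overlap e (xor_span zs ZI) \<Longrightarrow> e \<in> xor_span xs XI"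
  shows False
proof -
  obtain x1 x2 where x: "x1 \<in> xor_span xs XI" "x2 \<in> xor_span xs XI"
    and U: "xor_span xs XI \<subseteq> {{}, x1, x2, sym_diff x1 x2}"
    and degenerate: "card XI \<le> 1 \<Longrightarrow> x2 = {}" "card XI = 0 \<Longrightarrow> x1 = {}"
    using xor_span_at_most_two[OF fin(1) dims(2), where f = xs] by blast
  have "x1 \<subseteq> {0..<6}" "x2 \<subseteq> {0..<6}"
    using x xor_span_subset_Pow[where f = xs and A = XI, OF supp(1)] by blast+
  note bounds = dual_low_weight_code_bound[OF sd_closed_xor_span[OF fin(2)]
      xor_span_subset_Pow[where f = zs and A = ZI, OF supp(2)] this U X_Z Z_X]
  have "card ZI = 5 - card XI" using dims(1) by simp
  then have "card (xor_span zs ZI) \<le> 2 ^ (5 - card XI)"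
    using card_xor_span_le[OF fin(2), of zs] by simp
  moreover have "card XI = 0 \<or> card XI = 1 \<or> card XI = 2" using dims(2) by auto
  ultimately show False using bounds degenerate by auto
qed

text \<open>By symmetry the restriction on the first span can be dropped.\<close>
lemma no_low_weight_dual_pair:
  fixes xs zs :: "'i \<Rightarrow> nat set"
  assumes fin: "finite XI" "finite ZI" and dim: "card XI + card ZI = 5"
    and supp: "\<And>i. xs i \<subseteq> {0..<6}" "\<And>i. zs i \<subseteq> {0..<6}"
    and X_Z: "\<And>e. low_weight 6 e \<Longrightarrow> even_overlap e (xor_span xs XI) \<Longrightarrow> e \<in> xor_span zs ZI"
    and Z_X: "\<And>e. low_weight 6 e \<Longrightarrow> even_overlap e (xor_span zs ZI) \<Longrightarrow> e \<in> xor_span xs XI"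
  shows False
proof (cases "card XI \<le> 2")
  case True
  then show False by (rule no_low_weight_dual_pair_small[OF fin dim _ supp X_Z Z_X])
next
  case False
  then have "card ZI \<le> 2" "card ZI + card XI = 5" using dim by auto
  then show False by (intro no_low_weight_dual_pair_small[OF fin(2,1) _ _ supp(2,1) Z_X X_Z])
qed

section \<open>Pauli operators\<close>

text \<open>Distinct non-identity single-qubit Pauli matrices anticommute; all other pairs commute.\<close>
definition anticommute1 :: "pauli1 \<Rightarrow> pauli1 \<Rightarrow> bool" where
  "anticommute1 p q \<longleftrightarrow> p \<noteq> PI \<and> q \<noteq> PI \<and> p \<noteq> q"

lemma mult1_swap_phase:
  "(4::int) dvd int (fst (mult1 p q)) - int (fst (mult1 q p)) - (if anticommute1 p q then 2 else 0)"
  by (cases p; cases q) (simp_all add: anticommute1_def)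

lemma sum_if_two_card:
  "(\<Sum>j<(n::nat). if P j then 2 else 0) = (2::int) * int (card {j. j < n \<and> P j})"
proof -
  have "(\<Sum>j<n. if P j then 2 else 0) = (\<Sum>j \<in> {j \<in> {..<n}. P j}. (2::int))"
    by (rule sum.inter_filter[symmetric]) simp
  also have "{j \<in> {..<n}. P j} = {j. j < n \<and> P j}" by auto
  finally show ?thesis by (simp add: mult.commute)
qed

lemma anticommute_odd_factors:
  assumes "anticommute n a b"
  shows "odd (card {j. j < n \<and> anticommute1 (snd a j) (snd b j)})"
proof -
  define X where "X = (\<Sum>j<n. fst (mult1 (snd a j) (snd b j)))"
  define Y where "Y = (\<Sum>j<n. fst (mult1 (snd b j) (snd a j)))"
  define c where "c = card {j. j < n \<and> anticommute1 (snd a j) (snd b j)}"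
  have "(fst a + fst b + X) mod 4 = (2 + (fst b + fst a + Y) mod 4) mod 4"
    using assms unfolding anticommute_def pmult_def X_def Y_def by simp
  also have "\<dots> = (2 + (fst b + fst a + Y)) mod 4"
    by (rule mod_add_right_eq)
  finally have "int (fst a + fst b + X) mod 4 = int (2 + (fst b + fst a + Y)) mod 4"
    by (metis of_nat_mod of_nat_numeral)
  then have phase: "(4::int) dvd int X - int Y - 2"
    by (simp add: mod_eq_dvd_iff algebra_simps)
  have "(4::int) dvd (\<Sum>j<n. int (fst (mult1 (snd a j) (snd b j))) - int (fst (mult1 (snd b j) (snd a j)))
      - (if anticommute1 (snd a j) (snd b j) then 2 else 0))"
    by (intro dvd_sum mult1_swap_phase)
  then have factors: "(4::int) dvd int X - int Y - 2 * int c"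
    by (simp add: X_def Y_def c_def sum_subtractf sum_if_two_card)
  have "(4::int) dvd 2 * int c - 2" using dvd_diff[OF phase factors] by (simp add: algebra_simps)
  then show ?thesis unfolding c_def[symmetric] by presburger
qed

text \<open>The qubits on which a Pauli operator anticommutes with the single-qubit matrix P.  The
  X-support of an operator is its anti-support for Z, the Z-support its anti-support for X.\<close>
definition anti_support :: "pauli1 \<Rightarrow> nat \<Rightarrow> pauli \<Rightarrow> nat set" where
  "anti_support P n a = {j. j < n \<and> anticommute1 P (snd a j)}"

lemma anticommute1_mult1:
  "anticommute1 P (snd (mult1 q r)) \<longleftrightarrow> anticommute1 P q \<noteq> anticommute1 P r"
  by (cases P; cases q; cases r) (simp_all add: anticommute1_def)

lemma anti_support_pmult:
  "anti_support P n (pmult m a b) = sym_diff (anti_support P n a) (anti_support P n b)"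
  by (auto simp: anti_support_def pmult_def anticommute1_mult1)

lemma anti_support_pid [simp]: "anti_support P n pid = {}"
  by (simp add: anti_support_def pid_def anticommute1_def)

lemma gen_group_anti_support:
  assumes "s \<in> gen_group m (g ` I)" "finite I"
  obtains A where "A \<subseteq> I" "\<And>P. anti_support P n s = parity_sum (\<lambda>i. anti_support P n (g i)) A"
proof -
  from assms(1) have "\<exists>A \<subseteq> I. \<forall>P. anti_support P n s = parity_sum (\<lambda>i. anti_support P n (g i)) A"
  proof (induction rule: gen_group.induct)
    case gen_id
    show ?case by (intro exI[of _ "{}"]) simp
  next
    case (gen_step h s)
    obtain i where i: "i \<in> I" "h = g i" using gen_step.hyps(1) by blast
    obtain A where A: "A \<subseteq> I" "\<And>P. anti_support P n s = parity_sum (\<lambda>i. anti_support P n (g i)) A"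
      using gen_step.IH by blast
    have "finite A" using A(1) assms(2) finite_subset by blast
    then have "anti_support P n (pmult m h s) = parity_sum (\<lambda>i. anti_support P n (g i)) (sym_diff {i} A)"
      for P by (simp add: anti_support_pmult parity_sum_sym_diff A(2) i(2))
    moreover have "sym_diff {i} A \<subseteq> I" using i(1) A(1) by blast
    ultimately show ?case by blast
  qed
  then show thesis using that by blast
qed

lemma css_anti_supports:
  assumes css: "\<And>i. i \<in> I \<Longrightarrow> css_type n (g i)" and "finite I" and s: "s \<in> gen_group m (g ` I)"
  defines "XI \<equiv> {i \<in> I. anti_support PX n (g i) = {}}"
  shows "anti_support PZ n s \<in> xor_span (\<lambda>i. anti_support PZ n (g i)) XI"
    and "anti_support PX n s \<in> xor_span (\<lambda>i. anti_support PX n (g i)) (I - XI)"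
proof -
  obtain A where A: "A \<subseteq> I" "\<And>P. anti_support P n s = parity_sum (\<lambda>i. anti_support P n (g i)) A"
    using gen_group_anti_support[OF s \<open>finite I\<close>] by blast
  have Z_type: "anti_support PZ n (g i) = {}" if "i \<in> I - XI" for i
  proof -
    have "\<not> (\<forall>j<n. snd (g i) j \<in> {PI, PX})"
      using that by (auto simp: XI_def anti_support_def anticommute1_def)
    then have "\<forall>j<n. snd (g i) j \<in> {PI, PZ}" using css[of i] that by (auto simp: css_type_def)
    then show ?thesis by (auto simp: anti_support_def anticommute1_def)
  qed
  have "anti_support PZ n s = parity_sum (\<lambda>i. anti_support PZ n (g i)) (A \<inter> XI)"
    unfolding A(2) using A(1) Z_type by (intro parity_sum_restrict) blast
  then show "anti_support PZ n s \<in> xor_span (\<lambda>i. anti_support PZ n (g i)) XI"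
    by (auto simp: xor_span_def)
  have "anti_support PX n s = parity_sum (\<lambda>i. anti_support PX n (g i)) (A \<inter> (I - XI))"
    unfolding A(2) using A(1) by (intro parity_sum_restrict) (auto simp: XI_def)
  then show "anti_support PX n s \<in> xor_span (\<lambda>i. anti_support PX n (g i)) (I - XI)"
    by (auto simp: xor_span_def)
qed

lemma error_pair_product:
  assumes e: "low_weight n e" and P: "P \<noteq> PI"
  obtains Ea Eb where "Ea \<in> errors n" "Eb \<in> errors n"
    "snd (pmult n (padj Ea) Eb) = (\<lambda>j. if j \<in> e then P else PI)"
proof -
  have P': "P \<in> {PX, PY, PZ}" using P by (cases P) auto
  have "card e = 1 \<or> card e = 2" using e by (auto simp: low_weight_def)
  then show thesis
  proof
    assume "card e = 1"
    then obtain i where i: "e = {i}" by (rule card_1_singletonE)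
    have "pid \<in> errors n" by (simp add: errors_def)
    moreover have "single i P \<in> errors n" using i e P' by (auto simp: errors_def low_weight_def)
    moreover have "snd (pmult n (padj pid) (single i P)) = (\<lambda>j. if j \<in> e then P else PI)"
      using i by (auto simp: pmult_def padj_def pid_def single_def)
    ultimately show thesis by (rule that)
  next
    assume "card e = 2"
    then obtain i k where ik: "e = {i, k}" "i \<noteq> k" by (meson card_2_iff)
    then have "single i P \<in> errors n" "single k P \<in> errors n"
      using e P' by (auto simp: errors_def low_weight_def)
    moreover have "snd (pmult n (padj (single i P)) (single k P)) = (\<lambda>j. if j \<in> e then P else PI)"
      using ik P by (cases P) (auto simp: pmult_def padj_def single_def)
    ultimately show thesis by (rule that)
  qed
qed

text \<open>The error-correction condition for one- and two-qubit products: if P on e commutes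
  with the whole stabilizer group (its support meets every anti-support for P evenly), then
  it must itself lie in the group up to phase, so e is the anti-support for Q of a group
  element, for any Q anticommuting with P.\<close>
lemma correctable_low_weight:
  assumes correct: "\<forall>Ea\<in>errors n. \<forall>Eb\<in>errors n.
        (\<exists>s\<in>S. anticommute n (pmult n (padj Ea) Eb) s) \<or> (\<exists>s\<in>S. eq_phase (pmult n (padj Ea) Eb) s)"
    and e: "low_weight n e" and PQ: "anticommute1 P Q"
    and even: "even_overlap e (anti_support P n ` S)"
  shows "e \<in> anti_support Q n ` S"
proof -
  have "P \<noteq> PI" using PQ by (simp add: anticommute1_def)
  then obtain Ea Eb where E: "Ea \<in> errors n" "Eb \<in> errors n"
    and E_P: "snd (pmult n (padj Ea) Eb) = (\<lambda>j. if j \<in> e then P else PI)"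
    by (rule error_pair_product[OF e])
  have e_n: "e \<subseteq> {0..<n}" using e by (simp add: low_weight_def)
  consider s where "s \<in> S" "anticommute n (pmult n (padj Ea) Eb) s"
    | s where "s \<in> S" "eq_phase (pmult n (padj Ea) Eb) s"
    using correct E by blast
  then show ?thesis
  proof cases
    case 1
    have "{j. j < n \<and> anticommute1 (snd (pmult n (padj Ea) Eb) j) (snd s j)} = e \<inter> anti_support P n s"
      using e_n by (auto simp: E_P anti_support_def anticommute1_def)
    then have "odd (card (e \<inter> anti_support P n s))" using anticommute_odd_factors[OF 1(2)] by simp
    then show ?thesis using even 1(1) by (auto simp: even_overlap_def)
  next
    case 2
    have "snd s = (\<lambda>j. if j \<in> e then P else PI)" using 2(2) E_P by (simp add: eq_phase_def)
    then have "anti_support Q n s = e"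
      using e_n PQ by (auto simp: anti_support_def anticommute1_def)
    then show ?thesis using 2(1) by blast
  qed
qed

lemma css_six_qubit_code_not_correcting:
  fixes g :: "nat \<Rightarrow> pauli"
  assumes css: "\<forall>i<5. css_type 6 (g i)"
    and correct: "\<forall>Ea\<in>errors 6. \<forall>Eb\<in>errors 6.
        (\<exists>s\<in>gen_group 6 (g ` {0..<5}). anticommute 6 (pmult 6 (padj Ea) Eb) s) \<or>
        (\<exists>s\<in>gen_group 6 (g ` {0..<5}). eq_phase (pmult 6 (padj Ea) Eb) s)"
  shows False
proof -
  define S where "S = gen_group 6 (g ` {0..<5})"
  define XI where "XI = {i \<in> {0..<5::nat}. anti_support PX 6 (g i) = {}}"
  define xs where "xs i = anti_support PZ 6 (g i)" for i
  define zs where "zs i = anti_support PX 6 (g i)" for i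
  note correct = correct[folded S_def]
  have supports: "anti_support PZ 6 s \<in> xor_span xs XI"
    "anti_support PX 6 s \<in> xor_span zs ({0..<5} - XI)" if "s \<in> S" for s
    using css_anti_supports[of "{0..<5}" 6 g s 6] css that unfolding S_def XI_def xs_def zs_def by auto
  have "e \<in> xor_span zs ({0..<5} - XI)" if "low_weight 6 e" "even_overlap e (xor_span xs XI)" for e
  proof -
    have "even_overlap e (anti_support PZ 6 ` S)" using that(2) supports by (auto simp: even_overlap_def)
    then show ?thesis using correctable_low_weight[OF correct that(1), of PZ PX] supports
      by (auto simp: anticommute1_def)
  qed
  moreover have "e \<in> xor_span xs XI"
    if "low_weight 6 e" "even_overlap e (xor_span zs ({0..<5} - XI))" for e
  proof -
    have "even_overlap e (anti_support PX 6 ` S)" using that(2) supports by (auto simp: even_overlap_def)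
    then show ?thesis using correctable_low_weight[OF correct that(1), of PX PZ] supports
      by (auto simp: anticommute1_def)
  qed
  moreover have "card XI + card ({0..<5} - XI) = 5"
  proof -
    have "XI \<subseteq> {0..<5}" by (auto simp: XI_def)
    then show ?thesis
      using card_Diff_subset[of XI "{0..<5}"] card_mono[of "{0..<5}" XI] by (simp add: finite_subset)
  qed
  ultimately show False
    by (intro no_low_weight_dual_pair[of XI "{0..<5} - XI" xs zs])
      (auto simp: xs_def zs_def anti_support_def XI_def)
qed

theorem proposition1:
  shows "\<not> (\<exists>g :: nat \<Rightarrow> pauli.
     (\<forall>i<5. g i \<in> pauli_group 6) \<and>
     independent_gens 6 g {0..<5} \<and>
     (\<forall>i<5. \<forall>j<5. commute 6 (g i) (g j)) \<and>
     (\<forall>i<5. css_type 6 (g i)) \<and>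
     (\<forall>Ea\<in>errors 6. \<forall>Eb\<in>errors 6.
        (\<exists>s\<in>gen_group 6 (g ` {0..<5}). anticommute 6 (pmult 6 (padj Ea) Eb) s) \<or>
        (\<exists>s\<in>gen_group 6 (g ` {0..<5}). eq_phase (pmult 6 (padj Ea) Eb) s)))"
  using css_six_qubit_code_not_correcting by blast

end
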